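(* Let $H\in(1/2,1)$, $\alpha\in(1-H,1)$, $T>0$, $N\ge2$, $h=T/N$, $t_n=nh$. Then there is a constant $C$ (independent of $N$) such that for all $\eta\in[0,T]$, $1\le j\le N$ and $\tau\in(t_{j-1},t_j]$, $$\int_0^\eta\!\int_{t_{j-1}}^\tau(\eta-r)^{\alpha-1}(\tau-v)^{\alpha-1}|v-r|^{2H-2}\,\mathrm dv\,\mathrm dr\le C\mathcal R_{H,\alpha}(h),$$ $$\int_0^\eta\!\int_0^{t_{j-1}}(\eta-r)^{\alpha-1}\big((t_{j-1}-v)^{\alpha-1}-(\tau-v)^{\alpha-1}\big)|v-r|^{2H-2}\,\mathrm dv\,\mathrm dr\le C\mathcal R_{H,\alpha}(h).$$
   Context: $\mathcal R_{H,\alpha}(h)=h^{2(H+\alpha-1)}$ if $\alpha\in(1-H,2-2H)$, $\mathcal R_{H,\alpha}(h)=(|\ln h|\vee\ln T)h^{2-2H}$ if $\alpha=2-2H$, and $\mathcal R_{H,\alpha}(h)=h^\alpha$ if $\alpha\in(2-2H,1)$; $a\vee b=\max\{a,b\}$. *)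

theory Defs
  imports "HOL-Analysis.Analysis"
begin

definition rate :: "real \<Rightarrow> real \<Rightarrow> real \<Rightarrow> real \<Rightarrow> real" where
  "rate H \<alpha> T h =
     (if \<alpha> < 2 - 2*H then h powr (2*(H + \<alpha> - 1))
      else if \<alpha> = 2 - 2*H then max \<bar>ln h\<bar> (ln T) * h powr (2 - 2*H)
      else h powr \<alpha>)"

end

theory Submission
  imports Defs
begin

text \<open>
  Put p = 1 - \<alpha>, q = 2 - 2H, g x = x powr -p, k z = z powr -q, and let c be \<tau> or t_{j-1}.
  Since \<tau> - t_{j-1} \<le> h, both integrands are dominated by g (\<eta> - r) f (c - v) k |v - r|, where
  f y = y powr -p * min 1 (h/y): on [0, h] f coincides with g, and g y - g (y + d) \<le> f y for
  0 < d \<le> h.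

  As D = |c - r| \<le> (c - v) + |v - r|, one of the two distances is at least D/2, so monotonicity
  gives f y k z \<le> f y k (max y (D/2)) + f (max z (D/2)) k z. Hence the inner integral is bounded
  by a decreasing function \<Lambda> D of D alone (inner_majorant), and the same argument applied to
  g (\<eta> - r) \<Lambda> |c - r| bounds the double integral by 3 \<integral>_0^T g \<Lambda> (majorant_integral), which
  no longer depends on \<eta>, j, \<tau>. Splitting this integral according to whether x \<le> 2y and using
  Fubini reduces it to \<integral>_0^h u powr (1-2p-q), h \<integral>_h^T u powr -(2p+q) and
  h powr (1-p) \<integral>_h^T u powr -(p+q), each of which is O(R_{H,\<alpha>}(h)); in the critical case
  \<alpha> = 2 - 2H the last one is the logarithm \<integral>_h^T du/u.
\<close>

section \<open>Integrals of powers and translations\<close>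

lemma nn_integral_powr_from_0:
  assumes "s > -1" "0 \<le> b"
  shows "(\<integral>\<^sup>+u\<in>{0..b}. ennreal (u powr s) \<partial>lborel) = ennreal (b powr (s+1)/(s+1))"
  using nn_integral_has_integral_lebesgue'[OF _ has_integral_powr_from_0[OF assms]] by simp

lemma nn_integral_powr_interval:
  assumes "0 < a" "a \<le> b" "s \<noteq> -1"
  shows "(\<integral>\<^sup>+u\<in>{a..b}. ennreal (u powr s) \<partial>lborel)
    = ennreal ((b powr (s+1) - a powr (s+1))/(s+1))"
proof -
  have "((\<lambda>u. u powr s) has_integral
         ((\<lambda>u. u powr (s+1)/(s+1)) b - (\<lambda>u. u powr (s+1)/(s+1)) a)) {a..b}"
  proof (rule fundamental_theorem_of_calculus)
    fix x assume "x \<in> {a..b}"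
    hence "x > 0" using assms by auto
    have "((\<lambda>u. u powr (s+1)/(s+1)) has_real_derivative ((s+1) * x powr (s+1-1))/(s+1)) (at x)"
      by (intro derivative_eq_intros) (use \<open>x>0\<close> assms in auto)
    moreover have "((s+1) * x powr (s+1-1))/(s+1) = x powr s" using assms by simp
    ultimately show "((\<lambda>u. u powr (s+1)/(s+1)) has_vector_derivative x powr s) (at x within {a..b})"
      by (simp add: has_real_derivative_iff_has_vector_derivative[symmetric] has_field_derivative_at_within)
  qed (use assms in auto)
  from nn_integral_has_integral_lebesgue'[OF _ this] show ?thesis by (simp add: diff_divide_distrib)
qed

lemma nn_integral_inverse_interval:
  assumes "0 < a" "a \<le> b"
  shows "(\<integral>\<^sup>+u\<in>{a..b}. ennreal (u powr -1) \<partial>lborel) = ennreal (ln b - ln a)"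
proof -
  have "((\<lambda>u. u powr -1) has_integral (ln b - ln a)) {a..b}"
  proof (rule fundamental_theorem_of_calculus)
    fix x assume "x \<in> {a..b}"
    hence "x > 0" using assms by auto
    have "(ln has_real_derivative inverse x) (at x)"
      using DERIV_ln[OF \<open>x>0\<close>] .
    moreover have "inverse x = x powr -1" using \<open>x>0\<close> by (simp add: powr_minus)
    ultimately show "(ln has_vector_derivative x powr -1) (at x within {a..b})"
      by (simp add: has_real_derivative_iff_has_vector_derivative[symmetric] has_field_derivative_at_within)
  qed (use assms in auto)
  from nn_integral_has_integral_lebesgue'[OF _ this] show ?thesis by simp
qed

lemma nn_integral_reflect_interval:
  fixes F :: "real \<Rightarrow> ennreal"
  assumes [measurable]: "F \<in> borel_measurable borel"
  shows "(\<integral>\<^sup>+v. F (c - v) * indicator {c-L..c} v \<partial>lborel) = (\<integral>\<^sup>+y. F y * indicator {0..L} y \<partial>lborel)"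
proof -
  have "(\<integral>\<^sup>+y. F y * indicator {0..L} y \<partial>lborel)
      = (\<integral>\<^sup>+x. F (c + -1 * x) * indicator {0..L} (c + -1 * x) \<partial>lborel)"
    using nn_integral_real_affine[where f="\<lambda>y. F y * indicator {0..L} y" and c="-1" and t=c] by simp
  also have "\<dots> = (\<integral>\<^sup>+v. F (c - v) * indicator {c-L..c} v \<partial>lborel)"
    by (intro nn_integral_cong) (auto simp: indicator_def)
  finally show ?thesis by simp
qed

lemma nn_integral_shift_interval:
  fixes F :: "real \<Rightarrow> ennreal"
  assumes [measurable]: "F \<in> borel_measurable borel"
  shows "(\<integral>\<^sup>+v. F (v - c) * indicator {c..c+L} v \<partial>lborel) = (\<integral>\<^sup>+y. F y * indicator {0..L} y \<partial>lborel)"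
proof -
  have "(\<integral>\<^sup>+y. F y * indicator {0..L} y \<partial>lborel)
      = (\<integral>\<^sup>+x. F (-c + 1 * x) * indicator {0..L} (-c + 1 * x) \<partial>lborel)"
    using nn_integral_real_affine[where f="\<lambda>y. F y * indicator {0..L} y" and c="1" and t="-c"] by simp
  also have "\<dots> = (\<integral>\<^sup>+v. F (v - c) * indicator {c..c+L} v \<partial>lborel)"
    by (intro nn_integral_cong) (auto simp: indicator_def)
  finally show ?thesis by simp
qed

lemma nn_integral_abs_dist_le:
  fixes F :: "real \<Rightarrow> ennreal"
  assumes [measurable]: "F \<in> borel_measurable borel"
  shows "(\<integral>\<^sup>+v. F \<bar>v - c\<bar> * indicator {c-L..c+L} v \<partial>lborel) \<le> 2 * (\<integral>\<^sup>+y. F y * indicator {0..L} y \<partial>lborel)"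
proof -
  have "(\<integral>\<^sup>+v. F \<bar>v - c\<bar> * indicator {c-L..c+L} v \<partial>lborel)
     \<le> (\<integral>\<^sup>+v. F (c - v) * indicator {c-L..c} v + F (v - c) * indicator {c..c+L} v \<partial>lborel)"
    by (intro nn_integral_mono) (auto simp: indicator_def)
  also have "\<dots> = (\<integral>\<^sup>+v. F (c - v) * indicator {c-L..c} v \<partial>lborel)
      + (\<integral>\<^sup>+v. F (v - c) * indicator {c..c+L} v \<partial>lborel)"
    by (rule nn_integral_add) auto
  also have "\<dots> = 2 * (\<integral>\<^sup>+y. F y * indicator {0..L} y \<partial>lborel)"
    by (simp add: nn_integral_reflect_interval nn_integral_shift_interval mult_2)
  finally show ?thesis .
qed

lemma nn_integral_split_le:
  fixes F G1 G2 :: "real \<Rightarrow> real"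
  assumes [measurable]: "G1 \<in> borel_measurable borel" "G2 \<in> borel_measurable borel"
    and G1: "\<And>u. a \<le> u \<Longrightarrow> u \<le> b \<Longrightarrow> F u \<le> G1 u"
    and G2: "\<And>u. b \<le> u \<Longrightarrow> u \<le> c \<Longrightarrow> F u \<le> G2 u"
  shows "(\<integral>\<^sup>+u\<in>{a..c}. ennreal (F u) \<partial>lborel)
    \<le> (\<integral>\<^sup>+u\<in>{a..b}. ennreal (G1 u) \<partial>lborel) + (\<integral>\<^sup>+u\<in>{b..c}. ennreal (G2 u) \<partial>lborel)"
proof -
  have "(\<integral>\<^sup>+u\<in>{a..c}. ennreal (F u) \<partial>lborel)
      \<le> (\<integral>\<^sup>+u. ennreal (G1 u) * indicator {a..b} u + ennreal (G2 u) * indicator {b..c} u \<partial>lborel)"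
  proof (intro nn_integral_mono)
    fix u
    show "ennreal (F u) * indicator {a..c} u
      \<le> ennreal (G1 u) * indicator {a..b} u + ennreal (G2 u) * indicator {b..c} u"
    proof (cases "u \<in> {a..c}")
      case True
      show ?thesis
      proof (cases "u \<le> b")
        case True
        hence "ennreal (F u) \<le> ennreal (G1 u)" using \<open>u \<in> {a..c}\<close> G1 by (intro ennreal_leI) auto
        thus ?thesis using True \<open>u \<in> {a..c}\<close> by (simp add: add_increasing2)
      next
        case False
        hence "ennreal (F u) \<le> ennreal (G2 u)" using \<open>u \<in> {a..c}\<close> G2 by (intro ennreal_leI) auto
        thus ?thesis using False \<open>u \<in> {a..c}\<close> by (simp add: add_increasing)
      qed
    qed simp
  qed
  also have "\<dots> = (\<integral>\<^sup>+u\<in>{a..b}. ennreal (G1 u) \<partial>lborel) + (\<integral>\<^sup>+u\<in>{b..c}. ennreal (G2 u) \<partial>lborel)"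
    by (rule nn_integral_add) auto
  finally show ?thesis .
qed

lemma set_nn_integral_ennreal_cmult:
  fixes F :: "real \<Rightarrow> real"
  assumes "0 \<le> c" "F \<in> borel_measurable borel" "A \<in> sets borel"
  shows "(\<integral>\<^sup>+x\<in>A. ennreal (c * F x) \<partial>lborel) = ennreal c * (\<integral>\<^sup>+x\<in>A. ennreal (F x) \<partial>lborel)"
  using assms by (simp add: ennreal_mult' mult.assoc nn_integral_cmult)

section \<open>The kernels\<close>

locale fractional_kernels =
  fixes p q h T :: real
  assumes p0: "0 < p" and p1: "p < 1" and q0: "0 < q" and q1: "q < 1" and pq: "2*p + q < 2"
    and h0: "0 < h" and hT: "h \<le> T"
begin

text \<open>As 0 powr s = 0, the kernels vanish at their singularity; this only changes them on a null set.\<close>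

definition k :: "real \<Rightarrow> real" where "k z = z powr -q"
definition g :: "real \<Rightarrow> real" where "g x = x powr -p"
definition f :: "real \<Rightarrow> real" where "f y = y powr -p * min 1 (h/y)"

lemma k_measurable[measurable]: "k \<in> borel_measurable borel" unfolding k_def by measurable
lemma g_measurable[measurable]: "g \<in> borel_measurable borel" unfolding g_def by measurable
lemma f_measurable[measurable]: "f \<in> borel_measurable borel" unfolding f_def by measurable

lemma k_nonneg: "0 \<le> k z" unfolding k_def by simp
lemma g_nonneg: "0 \<le> g z" unfolding g_def by simp
lemma f_nonneg: "z \<ge> 0 \<Longrightarrow> 0 \<le> f z" unfolding f_def using h0 by simp
lemma k_0: "k 0 = 0" unfolding k_def by simp
lemma g_0: "g 0 = 0" unfolding g_def by simp
lemma f_0: "f 0 = 0" unfolding f_def by simp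

lemma k_antimono: "0 < a \<Longrightarrow> a \<le> b \<Longrightarrow> k b \<le> k a"
  unfolding k_def using q0 by (intro powr_mono2') auto

lemma g_antimono: "0 < a \<Longrightarrow> a \<le> b \<Longrightarrow> g b \<le> g a"
  unfolding g_def using p0 by (intro powr_mono2') auto

lemma f_antimono:
  assumes "0 < a" "a \<le> b"
  shows "f b \<le> f a"
  unfolding f_def
proof (rule mult_mono)
  show "b powr - p \<le> a powr - p" using p0 assms by (intro powr_mono2') auto
  show "min 1 (h / b) \<le> min 1 (h / a)" using h0 assms
    by (intro min.mono) (auto intro: divide_left_mono)
qed (use h0 assms in auto)

lemma f_below_h: "0 \<le> y \<Longrightarrow> y \<le> h \<Longrightarrow> f y = g y"
  unfolding f_def g_def by (cases "y = 0") auto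

lemma f_above_h:
  assumes "h \<le> y"
  shows "f y = h * y powr (-p-1)"
proof -
  have "y > 0" using h0 assms by simp
  hence "min 1 (h/y) = h/y" using assms by simp
  thus ?thesis unfolding f_def using \<open>y>0\<close> by (simp add: powr_diff powr_minus divide_simps)
qed

lemma f_half_le:
  assumes x: "0 < x"
  shows "f (x/2) \<le> 2 powr (p+1) * f x"
proof -
  have "(x/2) powr -p = 2 powr p * x powr -p" using x by (simp add: powr_divide powr_minus divide_simps)
  moreover have "min 1 (h/(x/2)) \<le> 2 * min 1 (h/x)" using x h0 by (auto simp: min_def field_simps)
  ultimately have "f (x/2) \<le> 2 powr p * x powr -p * (2 * min 1 (h/x))"
    unfolding f_def by (simp only:) (intro mult_left_mono, auto)
  also have "\<dots> = 2 powr (p+1) * f x" unfolding f_def by (simp add: powr_add)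
  finally show ?thesis .
qed

lemma g_increment_le_f:
  assumes y: "0 \<le> y" and d: "0 < d" "d \<le> h"
  shows "g y - g (y + d) \<le> f y"
proof (cases "y = 0")
  case True thus ?thesis using d by (simp add: f_0 g_def)
next
  case False
  hence y0: "y > 0" using y by simp
  define t where "t = y / (y+d)"
  have t: "0 < t" "t \<le> 1" using y0 d by (auto simp: t_def)
  have "t \<le> t powr p" using t p0 p1 powr_mono'[of p 1 t] by simp
  have "(y + d) powr -p = y powr -p * t powr p"
    using y0 d by (simp add: t_def powr_divide powr_minus divide_simps)
  hence "g y - g (y + d) \<le> y powr -p * (1 - t)"
    unfolding g_def using mult_right_mono[OF \<open>t \<le> t powr p\<close>, of "y powr -p"]
    by (simp add: algebra_simps)
  also have "1 - t = d / (y + d)" using y0 d by (simp add: t_def field_simps)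
  also have "d/(y+d) \<le> min 1 (h/y)" using y0 d by (auto simp: frac_le)
  hence "y powr -p * (d/(y+d)) \<le> f y" unfolding f_def by (intro mult_left_mono) auto
  finally show ?thesis .
qed

section \<open>Reduction to a single integral\<close>

lemma product_le_split_at_half:
  assumes y: "0 \<le> y" and z: "0 \<le> z" and D: "D \<le> y + z"
  shows "f y * k z \<le> f y * k (max y (D/2)) + f (max z (D/2)) * k z"
proof (cases "y \<le> z")
  case True
  show ?thesis
  proof (cases "y = 0")
    case True thus ?thesis using f_0 f_nonneg k_nonneg z by simp
  next
    case False
    hence "k z \<le> k (max y (D/2))" using y True D by (intro k_antimono) auto
    hence "f y * k z \<le> f y * k (max y (D/2))" using f_nonneg[OF y] by (rule mult_left_mono)
    moreover have "0 \<le> f (max z (D/2)) * k z" using f_nonneg k_nonneg z by simp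
    ultimately show ?thesis by linarith
  qed
next
  case False
  show ?thesis
  proof (cases "z = 0")
    case True thus ?thesis using f_nonneg k_nonneg y k_0 by simp
  next
    case z_pos: False
    hence "f y \<le> f (max z (D/2))" using z False D by (intro f_antimono) auto
    hence "f y * k z \<le> f (max z (D/2)) * k z" using k_nonneg by (rule mult_right_mono)
    moreover have "0 \<le> f y * k (max y (D/2))" using f_nonneg k_nonneg y by simp
    ultimately show ?thesis by linarith
  qed
qed

definition inner_majorant :: "real \<Rightarrow> ennreal" where
  "inner_majorant D = (\<integral>\<^sup>+y\<in>{0..T}. ennreal (f y * k (max y (D/2))) \<partial>lborel)
        + 2 * (\<integral>\<^sup>+z\<in>{0..T}. ennreal (f (max z (D/2)) * k z) \<partial>lborel)"

lemma inner_majorant_measurable[measurable]: "inner_majorant \<in> borel_measurable borel"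
  unfolding inner_majorant_def by measurable

lemma inner_majorant_antimono:
  assumes "0 < a" "a \<le> b"
  shows "inner_majorant b \<le> inner_majorant a"
  unfolding inner_majorant_def
proof (intro add_mono mult_left_mono nn_integral_mono)
  fix x
  show "ennreal (f x * k (max x (b/2))) * indicator {0..T} x
     \<le> ennreal (f x * k (max x (a/2))) * indicator {0..T} x"
  proof (cases "x \<in> {0..T}")
    case True
    have "k (max x (b/2)) \<le> k (max x (a/2))" using assms by (intro k_antimono) auto
    hence "f x * k (max x (b/2)) \<le> f x * k (max x (a/2))" using f_nonneg True by (intro mult_left_mono) auto
    thus ?thesis using True by (simp add: ennreal_leI)
  qed simp
  show "ennreal (f (max x (b/2)) * k x) * indicator {0..T} x
     \<le> ennreal (f (max x (a/2)) * k x) * indicator {0..T} x"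
  proof (cases "x \<in> {0..T}")
    case True
    have "f (max x (b/2)) \<le> f (max x (a/2))" using assms by (intro f_antimono) auto
    hence "f (max x (b/2)) * k x \<le> f (max x (a/2)) * k x" using k_nonneg by (intro mult_right_mono) auto
    thus ?thesis using True by (simp add: ennreal_leI)
  qed simp
qed simp

lemma inner_integral_le_majorant:
  assumes lo: "0 \<le> lo" "lo \<le> c" "c \<le> T" and r: "0 \<le> r" "r \<le> T"
  shows "(\<integral>\<^sup>+v. ennreal (f (c-v) * k \<bar>v-r\<bar>) * indicator {lo..c} v \<partial>lborel) \<le> inner_majorant \<bar>c - r\<bar>"
proof -
  define D where "D = \<bar>c - r\<bar>"
  define F1 where "F1 = (\<lambda>y. ennreal (f y * k (max y (D/2))))"
  define F2 where "F2 = (\<lambda>z. ennreal (f (max z (D/2)) * k z))"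
  have [measurable]: "F1 \<in> borel_measurable borel" "F2 \<in> borel_measurable borel"
    unfolding F1_def F2_def by measurable
  have "(\<integral>\<^sup>+v. ennreal (f (c-v) * k \<bar>v-r\<bar>) * indicator {lo..c} v \<partial>lborel)
     \<le> (\<integral>\<^sup>+v. F1 (c - v) * indicator {c-T..c} v + F2 \<bar>v - r\<bar> * indicator {r-T..r+T} v \<partial>lborel)"
  proof (intro nn_integral_mono)
    fix v
    show "ennreal (f (c-v) * k \<bar>v-r\<bar>) * indicator {lo..c} v
       \<le> F1 (c - v) * indicator {c-T..c} v + F2 \<bar>v - r\<bar> * indicator {r-T..r+T} v"
    proof (cases "v \<in> {lo..c}")
      case True
      hence "f (c-v) * k \<bar>v-r\<bar>
          \<le> f (c-v) * k (max (c-v) (D/2)) + f (max \<bar>v-r\<bar> (D/2)) * k \<bar>v-r\<bar>"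
        by (intro product_le_split_at_half) (auto simp: D_def)
      hence "ennreal (f (c-v) * k \<bar>v-r\<bar>)
          \<le> ennreal (f (c-v) * k (max (c-v) (D/2)) + f (max \<bar>v-r\<bar> (D/2)) * k \<bar>v-r\<bar>)"
        by (rule ennreal_leI)
      also have "\<dots> = F1 (c - v) + F2 \<bar>v - r\<bar>"
        unfolding F1_def F2_def using True f_nonneg k_nonneg by (intro ennreal_plus) auto
      finally have "ennreal (f (c-v) * k \<bar>v-r\<bar>) \<le> F1 (c - v) + F2 \<bar>v - r\<bar>" .
      thus ?thesis using True lo r by simp
    qed simp
  qed
  also have "\<dots> = (\<integral>\<^sup>+v. F1 (c - v) * indicator {c-T..c} v \<partial>lborel)
      + (\<integral>\<^sup>+v. F2 \<bar>v - r\<bar> * indicator {r-T..r+T} v \<partial>lborel)"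
    by (rule nn_integral_add) auto
  also have "\<dots> \<le> (\<integral>\<^sup>+y. F1 y * indicator {0..T} y \<partial>lborel) + 2 * (\<integral>\<^sup>+y. F2 y * indicator {0..T} y \<partial>lborel)"
    by (intro add_mono nn_integral_abs_dist_le) (simp_all add: nn_integral_reflect_interval)
  also have "\<dots> = inner_majorant D" unfolding inner_majorant_def F1_def F2_def by simp
  finally show ?thesis by (simp add: D_def)
qed

definition majorant_integral :: ennreal where
  "majorant_integral = (\<integral>\<^sup>+x\<in>{0..T}. ennreal (g x) * inner_majorant x \<partial>lborel)"

lemma g_mult_inner_majorant_le:
  assumes "0 \<le> x" "0 < y"
  shows "ennreal (g x) * inner_majorant y \<le> ennreal (g x) * inner_majorant x + ennreal (g y) * inner_majorant y"
proof (cases "x \<le> y")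
  case True
  show ?thesis
  proof (cases "x = 0")
    case True thus ?thesis by (simp add: g_0)
  next
    case False
    hence "inner_majorant y \<le> inner_majorant x" using True assms by (intro inner_majorant_antimono) auto
    hence "ennreal (g x) * inner_majorant y \<le> ennreal (g x) * inner_majorant x" by (rule mult_left_mono) simp
    thus ?thesis by (simp add: add_increasing2)
  qed
next
  case False
  hence "g x \<le> g y" using assms by (intro g_antimono) auto
  hence "ennreal (g x) * inner_majorant y \<le> ennreal (g y) * inner_majorant y"
    by (intro mult_right_mono) (auto simp: ennreal_leI)
  thus ?thesis by (simp add: add_increasing)
qed

lemma outer_integral_le_majorant_integral:
  assumes e: "0 \<le> \<eta>" "\<eta> \<le> T" and c: "0 \<le> c" "c \<le> T"
  shows "(\<integral>\<^sup>+r\<in>{0..\<eta>}. ennreal (g (\<eta> - r)) * inner_majorant \<bar>c - r\<bar> \<partial>lborel) \<le> 3 * majorant_integral"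
proof -
  define F where "F = (\<lambda>x. ennreal (g x) * inner_majorant x)"
  have [measurable]: "F \<in> borel_measurable borel" unfolding F_def by measurable
  have "(\<integral>\<^sup>+r\<in>{0..\<eta>}. ennreal (g (\<eta> - r)) * inner_majorant \<bar>c - r\<bar> \<partial>lborel)
     \<le> (\<integral>\<^sup>+r. F (\<eta> - r) * indicator {\<eta>-T..\<eta>} r + F \<bar>r - c\<bar> * indicator {c-T..c+T} r \<partial>lborel)"
  proof (intro nn_integral_mono_AE eventually_mono[OF AE_lborel_singleton[of c]] impI)
    fix r assume "r \<noteq> c"
    show "ennreal (g (\<eta> - r)) * inner_majorant \<bar>c - r\<bar> * indicator {0..\<eta>} r
       \<le> F (\<eta> - r) * indicator {\<eta>-T..\<eta>} r + F \<bar>r - c\<bar> * indicator {c-T..c+T} r"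
    proof (cases "r \<in> {0..\<eta>}")
      case True
      thus ?thesis using g_mult_inner_majorant_le[of "\<eta> - r" "\<bar>c - r\<bar>"] \<open>r \<noteq> c\<close> e c
        by (simp add: F_def abs_minus_commute[of r c])
    qed simp
  qed
  also have "\<dots> = (\<integral>\<^sup>+r. F (\<eta> - r) * indicator {\<eta>-T..\<eta>} r \<partial>lborel)
      + (\<integral>\<^sup>+r. F \<bar>r - c\<bar> * indicator {c-T..c+T} r \<partial>lborel)"
    by (rule nn_integral_add) auto
  also have "\<dots> \<le> (\<integral>\<^sup>+x\<in>{0..T}. F x \<partial>lborel) + 2 * (\<integral>\<^sup>+x\<in>{0..T}. F x \<partial>lborel)"
    by (intro add_mono nn_integral_abs_dist_le) (simp_all add: nn_integral_reflect_interval)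
  also have "\<dots> = 3 * (\<integral>\<^sup>+x\<in>{0..T}. F x \<partial>lborel)"
    by (metis distrib_right mult_numeral_1 numeral_One one_plus_numeral semiring_norm(3))
  finally show ?thesis unfolding F_def majorant_integral_def .
qed

text \<open>Both integrands of the theorem have this form, with w v = g (\<tau> - v), resp.
  w v = g (t_{j-1} - v) - g (\<tau> - v).\<close>

lemma double_integral_le_majorant_integral:
  assumes e: "0 \<le> \<eta>" "\<eta> \<le> T" and c: "0 \<le> lo" "lo \<le> c" "c \<le> T"
    and w: "\<And>v. v \<in> {lo..c} \<Longrightarrow> w v \<le> f (c - v)"
  shows "(\<integral>\<^sup>+r\<in>{0..\<eta>}. (\<integral>\<^sup>+v\<in>{lo..c}. ennreal (g (\<eta>-r) * w v * k \<bar>v-r\<bar>) \<partial>lborel) \<partial>lborel)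
    \<le> 3 * majorant_integral"
proof -
  have "(\<integral>\<^sup>+r\<in>{0..\<eta>}. (\<integral>\<^sup>+v\<in>{lo..c}. ennreal (g (\<eta>-r) * w v * k \<bar>v-r\<bar>) \<partial>lborel) \<partial>lborel)
     \<le> (\<integral>\<^sup>+r\<in>{0..\<eta>}. ennreal (g (\<eta> - r)) * inner_majorant \<bar>c - r\<bar> \<partial>lborel)"
  proof (intro nn_integral_mono)
    fix r
    show "(\<integral>\<^sup>+v\<in>{lo..c}. ennreal (g (\<eta>-r) * w v * k \<bar>v-r\<bar>) \<partial>lborel) * indicator {0..\<eta>} r
      \<le> ennreal (g (\<eta> - r)) * inner_majorant \<bar>c - r\<bar> * indicator {0..\<eta>} r"
    proof (cases "r \<in> {0..\<eta>}")
      case True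
      have "(\<integral>\<^sup>+v\<in>{lo..c}. ennreal (g (\<eta>-r) * w v * k \<bar>v-r\<bar>) \<partial>lborel)
          \<le> (\<integral>\<^sup>+v. ennreal (g (\<eta>-r)) * (ennreal (f (c-v) * k \<bar>v-r\<bar>) * indicator {lo..c} v) \<partial>lborel)"
      proof (intro nn_integral_mono)
        fix v
        show "ennreal (g (\<eta>-r) * w v * k \<bar>v-r\<bar>) * indicator {lo..c} v
          \<le> ennreal (g (\<eta>-r)) * (ennreal (f (c-v) * k \<bar>v-r\<bar>) * indicator {lo..c} v)"
        proof (cases "v \<in> {lo..c}")
          case True
          have "g (\<eta>-r) * w v * k \<bar>v-r\<bar> \<le> g (\<eta>-r) * f (c-v) * k \<bar>v-r\<bar>"
            using w[OF True] g_nonneg k_nonneg by (intro mult_right_mono mult_left_mono) auto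
          thus ?thesis using True g_nonneg k_nonneg f_nonneg[of "c-v"]
            by (simp add: ennreal_leI ennreal_mult[symmetric] mult.assoc)
        qed simp
      qed
      also have "\<dots> = ennreal (g (\<eta>-r)) * (\<integral>\<^sup>+v. ennreal (f (c-v) * k \<bar>v-r\<bar>) * indicator {lo..c} v \<partial>lborel)"
        by (subst nn_integral_cmult) auto
      also have "\<dots> \<le> ennreal (g (\<eta>-r)) * inner_majorant \<bar>c - r\<bar>"
        using True e c by (intro mult_left_mono inner_integral_le_majorant) auto
      finally show ?thesis using True by simp
    qed simp
  qed
  also have "\<dots> \<le> 3 * majorant_integral"
    using e c by (intro outer_integral_le_majorant_integral) auto
  finally show ?thesis .
qed

section \<open>Estimating the majorant integral\<close>

definition near_part :: "real \<Rightarrow> real \<Rightarrow> ennreal" where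
  "near_part x y = ennreal (if x \<le> 2*y then 3 * g x * f y * k y else 0)
    * indicator {0..T} x * indicator {0..T} y"

definition far_part_f :: "real \<Rightarrow> real \<Rightarrow> ennreal" where
  "far_part_f x y = ennreal (if 2*y < x then 2 powr q * x powr (-p-q) * f y else 0)
    * indicator {0..T} x * indicator {0..T} y"

definition far_part_k :: "real \<Rightarrow> real \<Rightarrow> ennreal" where
  "far_part_k x y = ennreal (if 2*y < x then 2 powr (p+2) * g x * f x * k y else 0)
    * indicator {0..T} x * indicator {0..T} y"

lemma parts_measurable:
  "case_prod near_part \<in> borel_measurable (lborel \<Otimes>\<^sub>M lborel)"
  "case_prod far_part_f \<in> borel_measurable (lborel \<Otimes>\<^sub>M lborel)"
  "case_prod far_part_k \<in> borel_measurable (lborel \<Otimes>\<^sub>M lborel)"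
  unfolding near_part_def far_part_f_def far_part_k_def by measurable

lemma majorant_integrand_split:
  assumes y: "0 \<le> y"
  shows "g x * (f y * k (max y (x/2)) + 2 * (f (max y (x/2)) * k y))
    \<le> (if x \<le> 2*y then 3 * g x * f y * k y else 0)
      + (if 2*y < x then 2 powr q * x powr (-p-q) * f y else 0)
      + (if 2*y < x then 2 powr (p+2) * g x * f x * k y else 0)"
proof (cases "x \<le> 2*y")
  case True
  hence "max y (x/2) = y" by simp
  thus ?thesis using True by (simp add: algebra_simps)
next
  case False
  hence x0: "x > 0" and m: "max y (x/2) = x/2" using y by auto
  have "k (x/2) = 2 powr q * x powr -q"
    unfolding k_def using x0 by (simp add: powr_divide powr_minus divide_simps)
  hence far_f: "g x * (f y * k (x/2)) = 2 powr q * x powr (-p-q) * f y"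
    unfolding g_def using x0 by (simp add: powr_add[symmetric] algebra_simps)
  have "2 * (f (x/2) * k y) \<le> 2 * (2 powr (p+1) * f x * k y)"
    using f_half_le[OF x0] k_nonneg by (intro mult_left_mono mult_right_mono) auto
  also have "\<dots> = 2 powr (p+2) * f x * k y" by (simp add: powr_add)
  finally have "g x * (2 * (f (x/2) * k y)) \<le> g x * (2 powr (p+2) * f x * k y)"
    using g_nonneg by (intro mult_left_mono) auto
  hence far_k: "g x * (2 * (f (x/2) * k y)) \<le> 2 powr (p+2) * g x * f x * k y"
    by (simp add: mult_ac)
  have "g x * (f y * k (max y (x/2)) + 2 * (f (max y (x/2)) * k y))
      = g x * (f y * k (x/2)) + g x * (2 * (f (x/2) * k y))"
    using m by (simp add: distrib_left)
  thus ?thesis using far_f far_k False by simp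
qed

lemma g_mult_inner_majorant:
  "ennreal (g x) * inner_majorant x
    = (\<integral>\<^sup>+y\<in>{0..T}. ennreal (g x * (f y * k (max y (x/2)) + 2 * (f (max y (x/2)) * k y))) \<partial>lborel)"
proof -
  have "ennreal (g x * (f y * k (max y (x/2)) + 2 * (f (max y (x/2)) * k y))) * indicator {0..T} y
      = ennreal (g x) * (ennreal (f y * k (max y (x/2))) * indicator {0..T} y
          + 2 * (ennreal (f (max y (x/2)) * k y) * indicator {0..T} y))" for y
  proof (cases "y \<in> {0..T}")
    case True
    have "0 \<le> f y * k (max y (x/2))" "0 \<le> f (max y (x/2)) * k y"
      using True f_nonneg k_nonneg by auto
    thus ?thesis using True g_nonneg by (simp add: ennreal_plus ennreal_mult' distrib_left)
  qed simp
  then show ?thesis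
    unfolding inner_majorant_def by (simp add: nn_integral_add nn_integral_cmult)
qed

lemma majorant_integrand_le_parts:
  assumes x: "x \<in> {0..T}" and y: "y \<in> {0..T}"
  shows "ennreal (g x * (f y * k (max y (x/2)) + 2 * (f (max y (x/2)) * k y)))
    \<le> near_part x y + far_part_f x y + far_part_k x y"
proof -
  have "ennreal (g x * (f y * k (max y (x/2)) + 2 * (f (max y (x/2)) * k y)))
      \<le> ennreal ((if x \<le> 2*y then 3 * g x * f y * k y else 0)
        + (if 2*y < x then 2 powr q * x powr (-p-q) * f y else 0)
        + (if 2*y < x then 2 powr (p+2) * g x * f x * k y else 0))"
    (is "_ \<le> ennreal (?A + ?B + ?C)")
    using y by (intro ennreal_leI majorant_integrand_split) auto
  also have "\<dots> = ennreal ?A + ennreal ?B + ennreal ?C"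
  proof -
    have "0 \<le> ?A" "0 \<le> ?B" "0 \<le> ?C" using x y f_nonneg g_nonneg k_nonneg by auto
    thus ?thesis by (simp only: ennreal_plus add_nonneg_nonneg)
  qed
  finally show ?thesis using x y by (simp add: near_part_def far_part_f_def far_part_k_def)
qed

lemma majorant_integral_le_parts:
  "majorant_integral \<le> (\<integral>\<^sup>+x. \<integral>\<^sup>+y. near_part x y \<partial>lborel \<partial>lborel)
      + (\<integral>\<^sup>+x. \<integral>\<^sup>+y. far_part_f x y \<partial>lborel \<partial>lborel)
      + (\<integral>\<^sup>+x. \<integral>\<^sup>+y. far_part_k x y \<partial>lborel \<partial>lborel)"
proof -
  have "ennreal (g x) * inner_majorant x * indicator {0..T} x
      \<le> (\<integral>\<^sup>+y. near_part x y + far_part_f x y + far_part_k x y \<partial>lborel)" for x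
  proof (cases "x \<in> {0..T}")
    case True
    hence "ennreal (g x) * inner_majorant x * indicator {0..T} x
        = (\<integral>\<^sup>+y\<in>{0..T}. ennreal (g x * (f y * k (max y (x/2)) + 2 * (f (max y (x/2)) * k y))) \<partial>lborel)"
      by (simp add: g_mult_inner_majorant)
    also have "\<dots> \<le> (\<integral>\<^sup>+y. near_part x y + far_part_f x y + far_part_k x y \<partial>lborel)"
      using True majorant_integrand_le_parts by (intro nn_integral_mono) (simp split: split_indicator)
    finally show ?thesis .
  qed simp
  hence "majorant_integral
      \<le> (\<integral>\<^sup>+x. \<integral>\<^sup>+y. near_part x y + far_part_f x y + far_part_k x y \<partial>lborel \<partial>lborel)"
    unfolding majorant_integral_def by (intro nn_integral_mono)
  also have "\<dots> = (\<integral>\<^sup>+x. \<integral>\<^sup>+y. near_part x y \<partial>lborel \<partial>lborel)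
      + (\<integral>\<^sup>+x. \<integral>\<^sup>+y. far_part_f x y \<partial>lborel \<partial>lborel)
      + (\<integral>\<^sup>+x. \<integral>\<^sup>+y. far_part_k x y \<partial>lborel \<partial>lborel)"
    using parts_measurable by (simp add: nn_integral_add)
  finally show ?thesis .
qed

definition f_moment :: ennreal where
  "f_moment = (\<integral>\<^sup>+u\<in>{0..T}. ennreal (f u * u powr (1-p-q)) \<partial>lborel)"

lemma near_part_inner:
  "(\<integral>\<^sup>+x. near_part x y \<partial>lborel)
    \<le> ennreal (3 * 2 powr (1-p) / (1-p)) * (ennreal (f y * y powr (1-p-q)) * indicator {0..T} y)"
proof (cases "y \<in> {0..T}")
  case True
  hence y: "0 \<le> y" by auto
  have "(\<integral>\<^sup>+x. near_part x y \<partial>lborel)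
      \<le> (\<integral>\<^sup>+x. ennreal (3 * f y * k y) * (ennreal (x powr -p) * indicator {0..2*y} x) \<partial>lborel)"
  proof (intro nn_integral_mono)
    fix x
    show "near_part x y \<le> ennreal (3 * f y * k y) * (ennreal (x powr -p) * indicator {0..2*y} x)"
      using y f_nonneg[OF y] k_nonneg
      by (cases "x \<in> {0..T} \<and> x \<le> 2*y")
        (auto simp: near_part_def g_def ennreal_mult[symmetric] mult_ac split: split_indicator)
  qed
  also have "\<dots> = ennreal (3 * f y * k y) * ennreal ((2*y) powr (1-p)/(1-p))"
    using nn_integral_powr_from_0[of "-p" "2*y"] p1 y by (subst nn_integral_cmult) auto
  also have "\<dots> = ennreal (3 * 2 powr (1-p) / (1-p)) * ennreal (f y * y powr (1-p-q))"
  proof (cases "y = 0")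
    case False
    hence "k y * (2*y) powr (1-p) = 2 powr (1-p) * y powr (1-p-q)"
      unfolding k_def using y by (simp add: powr_mult powr_add[symmetric] algebra_simps)
    hence "3 * f y * k y * ((2*y) powr (1-p)/(1-p)) = 3 * 2 powr (1-p) / (1-p) * (f y * y powr (1-p-q))"
      by (simp add: field_simps)
    thus ?thesis using y p1 f_nonneg[OF y] k_nonneg by (simp add: ennreal_mult[symmetric])
  qed (simp add: f_0)
  finally show ?thesis using True by simp
qed (simp add: near_part_def)

lemma near_part_integral_le:
  "(\<integral>\<^sup>+x. \<integral>\<^sup>+y. near_part x y \<partial>lborel \<partial>lborel) \<le> ennreal (3 * 2 powr (1-p) / (1-p)) * f_moment"
proof -
  have "(\<integral>\<^sup>+x. \<integral>\<^sup>+y. near_part x y \<partial>lborel \<partial>lborel) = (\<integral>\<^sup>+y. \<integral>\<^sup>+x. near_part x y \<partial>lborel \<partial>lborel)"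
    by (rule lborel_pair.Fubini'[OF parts_measurable(1), symmetric])
  also have "\<dots> \<le> (\<integral>\<^sup>+y. ennreal (3 * 2 powr (1-p) / (1-p))
      * (ennreal (f y * y powr (1-p-q)) * indicator {0..T} y) \<partial>lborel)"
    by (intro nn_integral_mono near_part_inner)
  also have "\<dots> = ennreal (3 * 2 powr (1-p) / (1-p)) * f_moment"
    unfolding f_moment_def by (subst nn_integral_cmult) auto
  finally show ?thesis .
qed

lemma far_part_k_inner:
  "(\<integral>\<^sup>+y. far_part_k x y \<partial>lborel)
    \<le> ennreal (2 powr (p+2) / (1-q)) * (ennreal (f x * x powr (1-p-q)) * indicator {0..T} x)"
proof (cases "x \<in> {0..T}")
  case True
  hence x: "0 \<le> x" by auto
  have "(\<integral>\<^sup>+y. far_part_k x y \<partial>lborel)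
      \<le> (\<integral>\<^sup>+y. ennreal (2 powr (p+2) * g x * f x) * (ennreal (y powr -q) * indicator {0..x} y) \<partial>lborel)"
  proof (intro nn_integral_mono)
    fix y
    show "far_part_k x y \<le> ennreal (2 powr (p+2) * g x * f x) * (ennreal (y powr -q) * indicator {0..x} y)"
      using x f_nonneg[OF x] g_nonneg
      by (cases "y \<in> {0..T} \<and> 2*y < x")
        (auto simp: far_part_k_def k_def ennreal_mult[symmetric] mult_ac split: split_indicator)
  qed
  also have "\<dots> = ennreal (2 powr (p+2) * g x * f x) * ennreal (x powr (1-q)/(1-q))"
    using nn_integral_powr_from_0[of "-q" x] q1 x by (subst nn_integral_cmult) auto
  also have "\<dots> = ennreal (2 powr (p+2) / (1-q)) * ennreal (f x * x powr (1-p-q))"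
  proof (cases "x = 0")
    case False
    hence "g x * x powr (1-q) = x powr (1-p-q)"
      unfolding g_def using x by (simp add: powr_add[symmetric] algebra_simps)
    hence "2 powr (p+2) * g x * f x * (x powr (1-q)/(1-q)) = 2 powr (p+2) / (1-q) * (f x * x powr (1-p-q))"
      by (simp add: field_simps)
    thus ?thesis using x q1 f_nonneg[OF x] g_nonneg by (simp add: ennreal_mult[symmetric])
  qed (simp add: f_0 g_0)
  finally show ?thesis using True by simp
qed (simp add: far_part_k_def)

lemma far_part_k_integral_le:
  "(\<integral>\<^sup>+x. \<integral>\<^sup>+y. far_part_k x y \<partial>lborel \<partial>lborel) \<le> ennreal (2 powr (p+2) / (1-q)) * f_moment"
proof -
  have "(\<integral>\<^sup>+x. \<integral>\<^sup>+y. far_part_k x y \<partial>lborel \<partial>lborel)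
      \<le> (\<integral>\<^sup>+x. ennreal (2 powr (p+2) / (1-q)) * (ennreal (f x * x powr (1-p-q)) * indicator {0..T} x) \<partial>lborel)"
    by (intro nn_integral_mono far_part_k_inner)
  also have "\<dots> = ennreal (2 powr (p+2) / (1-q)) * f_moment"
    unfolding f_moment_def by (subst nn_integral_cmult) auto
  finally show ?thesis .
qed

definition tail :: "real \<Rightarrow> real" where
  "tail e = (if e = 1 then ln T - ln h else (T powr (1-e) - h powr (1-e)) / (1-e))"

lemma nn_integral_tail: "(\<integral>\<^sup>+u\<in>{h..T}. ennreal (u powr -e) \<partial>lborel) = ennreal (tail e)"
proof (cases "e = 1")
  case True thus ?thesis using nn_integral_inverse_interval[OF h0 hT] by (simp add: tail_def)
next
  case False thus ?thesis using nn_integral_powr_interval[OF h0 hT, of "-e"] by (simp add: tail_def)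
qed

lemma tail_nonneg: "0 \<le> tail e"
proof -
  consider "e < 1" | "e = 1" | "1 < e" by linarith
  thus ?thesis
  proof cases
    case 1
    hence "h powr (1-e) \<le> T powr (1-e)" using h0 hT by (intro powr_mono2) auto
    thus ?thesis using 1 by (simp add: tail_def)
  next
    case 3
    hence "T powr (1-e) \<le> h powr (1-e)" using h0 hT by (intro powr_mono2') auto
    thus ?thesis using 3 by (simp add: tail_def divide_nonpos_neg)
  qed (use h0 hT in \<open>simp add: tail_def\<close>)
qed

lemma tail_gt1:
  assumes "1 < e"
  shows "tail e \<le> h powr (1-e) / (e-1)"
proof -
  have "tail e = (h powr (1-e) - T powr (1-e)) / (e-1)"
    using assms unfolding tail_def by (metis minus_diff_eq minus_divide_divide less_irrefl)
  also have "\<dots> \<le> h powr (1-e) / (e-1)" using assms by (intro divide_right_mono) auto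
  finally show ?thesis .
qed

lemma tail_lt1:
  assumes "e < 1"
  shows "tail e \<le> T powr (1-e) / (1-e)"
  using assms by (simp add: tail_def divide_right_mono)

lemma nn_integral_head:
  "(\<integral>\<^sup>+u\<in>{0..h}. ennreal (u powr (1-2*p-q)) \<partial>lborel) = ennreal (h powr (2-2*p-q) / (2-2*p-q))"
proof -
  have exponent: "1-2*p-q+1 = 2-2*p-q" by simp
  show ?thesis using nn_integral_powr_from_0[of "1-2*p-q" h, unfolded exponent] pq h0 by simp
qed

lemma f_moment_le: "f_moment \<le> ennreal (h powr (2-2*p-q) / (2-2*p-q) + h * tail (2*p+q))"
proof -
  have "f_moment \<le> (\<integral>\<^sup>+u\<in>{0..h}. ennreal (u powr (1-2*p-q)) \<partial>lborel)
      + (\<integral>\<^sup>+u\<in>{h..T}. ennreal (h * u powr -(2*p+q)) \<partial>lborel)"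
    unfolding f_moment_def
  proof (rule nn_integral_split_le)
    fix u assume "0 \<le> u" "u \<le> h"
    moreover have "u powr -p * u powr (1-p-q) = u powr (1-2*p-q)"
      by (subst powr_add[symmetric]) (simp add: algebra_simps)
    ultimately show "f u * u powr (1-p-q) \<le> u powr (1-2*p-q)"
      by (simp add: f_below_h g_def)
  next
    fix u assume "h \<le> u"
    thus "f u * u powr (1-p-q) \<le> h * u powr -(2*p+q)"
      using h0 by (simp add: f_above_h powr_add[symmetric])
  qed auto
  also have "\<dots> = ennreal (h powr (2-2*p-q) / (2-2*p-q)) + ennreal h * ennreal (tail (2*p+q))"
    using h0 by (simp add: nn_integral_head ennreal_mult' mult.assoc nn_integral_cmult nn_integral_tail[symmetric])
  also have "\<dots> = ennreal (h powr (2-2*p-q) / (2-2*p-q) + h * tail (2*p+q))"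
    using h0 pq tail_nonneg by (simp add: ennreal_plus ennreal_mult')
  finally show ?thesis .
qed

definition f_head_bound :: "real \<Rightarrow> real" where
  "f_head_bound x = (if x \<le> h then x powr (1-p) / (1-p) else h powr (1-p) * (1/(1-p) + 1/p))"

lemma f_head_bound_nonneg: "0 \<le> f_head_bound x"
  unfolding f_head_bound_def using p0 p1 by simp

lemma powr_mult_f_head_bound_le:
  assumes "0 \<le> x" "x \<le> h"
  shows "x powr (-p-q) * f_head_bound x \<le> x powr (1-2*p-q) / (1-p)"
proof (cases "x = 0")
  case False
  have "x powr (-p-q) * x powr (1-p) = x powr (1-2*p-q)"
    using False by (subst powr_add[symmetric]) (simp add: algebra_simps)
  thus ?thesis using assms by (simp add: f_head_bound_def)
qed simp

lemma f_head_bound_above_h: "h \<le> x \<Longrightarrow> f_head_bound x \<le> h powr (1-p) * (1/(1-p) + 1/p)"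
  using p0 p1 by (auto simp: f_head_bound_def distrib_left)

lemma nn_integral_f_le_head_bound:
  assumes x: "0 \<le> x" "x \<le> T"
  shows "(\<integral>\<^sup>+y\<in>{0..x}. ennreal (f y) \<partial>lborel) \<le> ennreal (f_head_bound x)"
proof (cases "x \<le> h")
  case True
  have "(\<integral>\<^sup>+y\<in>{0..x}. ennreal (f y) \<partial>lborel) = (\<integral>\<^sup>+y\<in>{0..x}. ennreal (y powr -p) \<partial>lborel)"
    using True by (intro nn_integral_cong) (simp add: f_below_h g_def split: split_indicator)
  also have "\<dots> = ennreal (f_head_bound x)"
    using nn_integral_powr_from_0[of "-p" x] p1 x True by (simp add: f_head_bound_def)
  finally show ?thesis by simp
next
  case False
  have "(\<integral>\<^sup>+y\<in>{0..x}. ennreal (f y) \<partial>lborel) \<le> (\<integral>\<^sup>+y\<in>{0..T}. ennreal (f y) \<partial>lborel)"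
    using x by (intro nn_integral_mono) (simp split: split_indicator)
  also have "\<dots> \<le> (\<integral>\<^sup>+y\<in>{0..h}. ennreal (y powr -p) \<partial>lborel)
      + (\<integral>\<^sup>+y\<in>{h..T}. ennreal (h * y powr -(p+1)) \<partial>lborel)"
    by (rule nn_integral_split_le) (auto simp: f_below_h g_def f_above_h)
  also have "\<dots> = ennreal (h powr (1-p) / (1-p)) + ennreal h * ennreal (tail (p+1))"
    using nn_integral_powr_from_0[of "-p" h] p1 h0
    by (simp add: ennreal_mult' mult.assoc nn_integral_cmult nn_integral_tail[symmetric])
  also have "\<dots> \<le> ennreal (h powr (1-p) / (1-p)) + ennreal (h powr (1-p) / p)"
  proof -
    have "h * tail (p+1) \<le> h * (h powr -p / p)"
      using tail_gt1[of "p+1"] p0 h0 by (intro mult_left_mono) auto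
    also have "\<dots> = h powr (1-p) / p" using h0 by (simp add: powr_diff powr_minus divide_simps)
    finally show ?thesis using h0 by (simp add: ennreal_mult'[symmetric] ennreal_leI del: ennreal_plus)
  qed
  also have "\<dots> = ennreal (h powr (1-p) / (1-p) + h powr (1-p) / p)"
    using p0 p1 by (intro ennreal_plus[symmetric]) auto
  also have "\<dots> = ennreal (f_head_bound x)"
    using False by (simp add: f_head_bound_def distrib_left)
  finally show ?thesis .
qed

lemma far_part_f_inner:
  "(\<integral>\<^sup>+y. far_part_f x y \<partial>lborel)
    \<le> ennreal (2 powr q * x powr (-p-q) * f_head_bound x) * indicator {0..T} x"
proof (cases "x \<in> {0..T}")
  case True
  have "(\<integral>\<^sup>+y. far_part_f x y \<partial>lborel)
      \<le> (\<integral>\<^sup>+y. ennreal (2 powr q * x powr (-p-q)) * (ennreal (f y) * indicator {0..x} y) \<partial>lborel)"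
    using True f_nonneg
    by (intro nn_integral_mono) (auto simp: far_part_f_def ennreal_mult split: split_indicator)
  also have "\<dots> = ennreal (2 powr q * x powr (-p-q)) * (\<integral>\<^sup>+y\<in>{0..x}. ennreal (f y) \<partial>lborel)"
    by (subst nn_integral_cmult) auto
  also have "\<dots> \<le> ennreal (2 powr q * x powr (-p-q)) * ennreal (f_head_bound x)"
    using True by (intro mult_left_mono nn_integral_f_le_head_bound) auto
  finally show ?thesis using True by (simp add: ennreal_mult'' f_head_bound_nonneg)
qed (simp add: far_part_f_def)

lemma far_part_f_integral_le:
  "(\<integral>\<^sup>+x. \<integral>\<^sup>+y. far_part_f x y \<partial>lborel \<partial>lborel)
    \<le> ennreal (2 powr q / (1-p) * (h powr (2-2*p-q) / (2-2*p-q))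
      + 2 powr q * (1/(1-p) + 1/p) * h powr (1-p) * tail (p+q))"
proof -
  have "(\<integral>\<^sup>+x. \<integral>\<^sup>+y. far_part_f x y \<partial>lborel \<partial>lborel)
      \<le> (\<integral>\<^sup>+x\<in>{0..T}. ennreal (2 powr q * x powr (-p-q) * f_head_bound x) \<partial>lborel)"
    by (intro nn_integral_mono far_part_f_inner)
  also have "\<dots> \<le> (\<integral>\<^sup>+x\<in>{0..h}. ennreal (2 powr q / (1-p) * x powr (1-2*p-q)) \<partial>lborel)
      + (\<integral>\<^sup>+x\<in>{h..T}. ennreal (2 powr q * (1/(1-p) + 1/p) * h powr (1-p) * x powr -(p+q)) \<partial>lborel)"
  proof (rule nn_integral_split_le)
    fix x assume "0 \<le> x" "x \<le> h"
    hence "2 powr q * (x powr (-p-q) * f_head_bound x) \<le> 2 powr q * (x powr (1-2*p-q) / (1-p))"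
      by (intro mult_left_mono powr_mult_f_head_bound_le) auto
    thus "2 powr q * x powr (-p-q) * f_head_bound x \<le> 2 powr q / (1-p) * x powr (1-2*p-q)"
      by (simp add: mult.assoc)
  next
    fix x assume "h \<le> x"
    hence "2 powr q * x powr (-p-q) * f_head_bound x
        \<le> 2 powr q * x powr (-p-q) * (h powr (1-p) * (1/(1-p) + 1/p))"
      by (intro mult_left_mono f_head_bound_above_h) auto
    thus "2 powr q * x powr (-p-q) * f_head_bound x
        \<le> 2 powr q * (1/(1-p) + 1/p) * h powr (1-p) * x powr -(p+q)"
      by (simp add: mult_ac)
  qed auto
  also have "\<dots> = ennreal (2 powr q / (1-p)) * ennreal (h powr (2-2*p-q) / (2-2*p-q))
      + ennreal (2 powr q * (1/(1-p) + 1/p) * h powr (1-p)) * ennreal (tail (p+q))"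
    using p0 p1 unfolding nn_integral_head[symmetric] nn_integral_tail[symmetric]
    by (subst (1 2) set_nn_integral_ennreal_cmult) auto
  also have "\<dots> = ennreal (2 powr q / (1-p) * (h powr (2-2*p-q) / (2-2*p-q))
      + 2 powr q * (1/(1-p) + 1/p) * h powr (1-p) * tail (p+q))"
  proof -
    have "0 \<le> 2 powr q / (1-p)" "0 \<le> h powr (2-2*p-q) / (2-2*p-q)"
      "0 \<le> 2 powr q * (1/(1-p) + 1/p) * h powr (1-p)" "0 \<le> tail (p+q)"
      using p0 p1 pq tail_nonneg by auto
    thus ?thesis by (simp only: ennreal_plus ennreal_mult mult_nonneg_nonneg)
  qed
  finally show ?thesis .
qed

definition majorant_bound :: real where
  "majorant_bound =
     (3 * 2 powr (1-p) / (1-p) + 2 powr (p+2) / (1-q)) * (h powr (2-2*p-q) / (2-2*p-q) + h * tail (2*p+q))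
     + (2 powr q / (1-p) * (h powr (2-2*p-q) / (2-2*p-q))
       + 2 powr q * (1/(1-p) + 1/p) * (h powr (1-p) * tail (p+q)))"

lemma majorant_integral_le_bound: "majorant_integral \<le> ennreal majorant_bound"
proof -
  define c1 c3 where "c1 = 3 * 2 powr (1-p) / (1-p)" and "c3 = 2 powr (p+2) / (1-q)"
  define M where "M = h powr (2-2*p-q) / (2-2*p-q) + h * tail (2*p+q)"
  define F where "F = 2 powr q / (1-p) * (h powr (2-2*p-q) / (2-2*p-q))
      + 2 powr q * (1/(1-p) + 1/p) * h powr (1-p) * tail (p+q)"
  have nonneg: "0 \<le> c1" "0 \<le> c3" "0 \<le> M" "0 \<le> F"
    unfolding c1_def c3_def M_def F_def using p0 p1 q1 pq h0 tail_nonneg by auto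
  have "majorant_integral \<le> ennreal c1 * f_moment + ennreal F + ennreal c3 * f_moment"
    using majorant_integral_le_parts near_part_integral_le far_part_f_integral_le far_part_k_integral_le
    unfolding c1_def c3_def F_def by (meson add_mono order_trans)
  also have "\<dots> \<le> ennreal c1 * ennreal M + ennreal F + ennreal c3 * ennreal M"
    unfolding M_def by (intro add_mono mult_left_mono f_moment_le) auto
  also have "\<dots> = ennreal (c1 * M + F + c3 * M)"
    using nonneg by (simp only: ennreal_plus ennreal_mult mult_nonneg_nonneg add_nonneg_nonneg)
  also have "c1 * M + F + c3 * M = majorant_bound"
    unfolding majorant_bound_def c1_def c3_def M_def F_def by (simp add: algebra_simps)
  finally show ?thesis .
qed

end

section \<open>Comparison with the rate\<close>

definition hscale_const :: "real \<Rightarrow> real \<Rightarrow> real \<Rightarrow> real" where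
  "hscale_const p q T = (if 1 < p+q then 1 else if p+q = 1 then 2 / ln 2 else T powr (1-p-q))"

definition tail_const :: "real \<Rightarrow> real \<Rightarrow> real \<Rightarrow> real \<Rightarrow> real \<Rightarrow> real" where
  "tail_const p q T a e =
     (if 1 < e then hscale_const p q T / (e-1)
      else if e = 1 then (if p+q = 1 then 2 else T powr (1-p-q) / (1-p-q))
      else T powr (a-(1-p)) * T powr (1-e) / (1-e))"

definition majorant_const :: "real \<Rightarrow> real \<Rightarrow> real \<Rightarrow> real" where
  "majorant_const p q T =
     (3 * 2 powr (1-p) / (1-p) + 2 powr (p+2) / (1-q))
       * (hscale_const p q T / (2-2*p-q) + tail_const p q T 1 (2*p+q))
     + (2 powr q / (1-p) * (hscale_const p q T / (2-2*p-q))
       + 2 powr q * (1/(1-p) + 1/p) * tail_const p q T (1-p) (p+q))"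

context fractional_kernels begin

abbreviation R :: real where "R \<equiv> rate (1 - q/2) (1-p) T h"

lemma rate_gt1: "1 < p+q \<Longrightarrow> R = h powr (2-2*p-q)"
  and rate_eq1: "p+q = 1 \<Longrightarrow> R = max \<bar>ln h\<bar> (ln T) * h powr q"
  and rate_lt1: "p+q < 1 \<Longrightarrow> R = h powr (1-p)"
  unfolding rate_def by (simp_all add: algebra_simps)

lemma h_powr_add_le: "0 \<le> \<delta> \<Longrightarrow> h powr (b + \<delta>) \<le> T powr \<delta> * h powr b"
  using h0 hT by (simp add: powr_add mult_right_mono powr_mono2)

lemma h_powr_mult_ln_le:
  assumes "0 < \<delta>"
  shows "h powr \<delta> * (ln T - ln h) \<le> T powr \<delta> / \<delta>"
proof -
  have "ln T - ln h = ln ((T/h) powr \<delta>) / \<delta>" using h0 hT assms by (simp add: ln_powr ln_div)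
  also have "\<dots> \<le> (T/h) powr \<delta> / \<delta>"
    using h0 hT assms by (intro divide_right_mono order.trans[OF ln_le_minus_one]) auto
  finally have "h powr \<delta> * (ln T - ln h) \<le> h powr \<delta> * ((T/h) powr \<delta> / \<delta>)"
    by (intro mult_left_mono) auto
  also have "\<dots> = T powr \<delta> / \<delta>" using h0 hT by (simp add: powr_divide)
  finally show ?thesis .
qed

lemma max_ln_ge: "h \<le> T/2 \<Longrightarrow> ln 2 / 2 \<le> max \<bar>ln h\<bar> (ln T)"
proof -
  assume "h \<le> T/2"
  hence "ln 2 \<le> ln (T/h)" using h0 by (subst ln_le_cancel_iff) (auto simp: field_simps)
  also have "ln (T/h) = ln T - ln h" using h0 hT by (simp add: ln_div)
  finally show ?thesis by linarith
qed

lemma hscale_le_rate: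
  assumes "h \<le> T/2"
  shows "h powr (2-2*p-q) \<le> hscale_const p q T * R"
proof -
  consider "1 < p+q" | "p+q = 1" | "p+q < 1" by linarith
  thus ?thesis
  proof cases
    case 1 thus ?thesis using rate_gt1 by (simp add: hscale_const_def)
  next
    case 2
    have "1 \<le> 2 / ln 2 * max \<bar>ln h\<bar> (ln T)" using max_ln_ge[OF assms] by (simp add: field_simps)
    hence "h powr q \<le> 2 / ln 2 * max \<bar>ln h\<bar> (ln T) * h powr q"
      using mult_right_mono[of 1 "2 / ln 2 * max \<bar>ln h\<bar> (ln T)" "h powr q"] by simp
    moreover have "2-2*p-q = q" using 2 by simp
    ultimately show ?thesis using 2 rate_eq1 by (simp only:) (simp add: hscale_const_def)
  next
    case 3
    thus ?thesis using rate_lt1 h_powr_add_le[of "1-p-q" "1-p"]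
      by (simp add: hscale_const_def algebra_simps)
  qed
qed

lemma h_powr_mult_tail_gt1_le_rate:
  assumes "h \<le> T/2" "1 < e" "a + 1 - e = 2-2*p-q"
  shows "h powr a * tail e \<le> hscale_const p q T / (e-1) * R"
proof -
  have "h powr a * tail e \<le> h powr a * (h powr (1-e) / (e-1))"
    using tail_gt1[OF assms(2)] by (intro mult_left_mono) auto
  also have "\<dots> = h powr (2-2*p-q) / (e-1)"
  proof -
    have "2-2*p-q = a + (1-e)" using assms(3) by simp
    thus ?thesis by (simp only: powr_add times_divide_eq_right)
  qed
  also have "\<dots> \<le> hscale_const p q T * R / (e-1)"
    using hscale_le_rate[OF assms(1)] assms(2) by (intro divide_right_mono) auto
  finally show ?thesis by simp
qed

lemma h_powr_mult_tail_1_le_rate: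
  assumes "1-p \<le> a" "a = 2-2*p-q"
  shows "h powr a * tail 1 \<le> (if p+q = 1 then 2 else T powr (1-p-q) / (1-p-q)) * R"
proof (cases "p+q = 1")
  case True
  have "ln T - ln h \<le> 2 * max \<bar>ln h\<bar> (ln T)" by linarith
  hence "h powr q * (ln T - ln h) \<le> h powr q * (2 * max \<bar>ln h\<bar> (ln T))"
    by (intro mult_left_mono) auto
  moreover have "a = q" using assms True by simp
  ultimately show ?thesis using True rate_eq1 by (simp add: tail_def mult_ac)
next
  case False
  hence pq1: "p+q < 1" using assms by linarith
  have "a = (1-p) + (1-p-q)" using assms by simp
  hence "h powr a * tail 1 = h powr (1-p) * (h powr (1-p-q) * (ln T - ln h))"
    by (simp only: powr_add) (simp add: tail_def mult.assoc)
  also have "\<dots> \<le> h powr (1-p) * (T powr (1-p-q) / (1-p-q))"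
    using pq1 by (intro mult_left_mono h_powr_mult_ln_le) auto
  finally show ?thesis using pq1 rate_lt1 by (simp add: mult_ac)
qed

lemma h_powr_mult_tail_lt1_le_rate:
  assumes "1-p \<le> a" "e < 1" "a + 1 - e = 2-2*p-q"
  shows "h powr a * tail e \<le> T powr (a-(1-p)) * T powr (1-e) / (1-e) * R"
proof -
  have "h powr a * tail e \<le> h powr a * (T powr (1-e) / (1-e))"
    using tail_lt1[OF assms(2)] by (intro mult_left_mono) auto
  also have "\<dots> \<le> T powr (a-(1-p)) * h powr (1-p) * (T powr (1-e) / (1-e))"
    using h_powr_add_le[of "a-(1-p)" "1-p"] assms by (intro mult_right_mono) auto
  also have "h powr (1-p) = R" using assms rate_lt1 by simp
  finally show ?thesis by (simp add: mult_ac)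
qed

lemma h_powr_mult_tail_le_rate:
  assumes "h \<le> T/2" "1-p \<le> a" "a + 1 - e = 2-2*p-q"
  shows "h powr a * tail e \<le> tail_const p q T a e * R"
proof -
  consider "1 < e" | "e = 1" | "e < 1" by linarith
  thus ?thesis
  proof cases
    case 1 thus ?thesis using h_powr_mult_tail_gt1_le_rate assms by (simp add: tail_const_def)
  next
    case 2 thus ?thesis using h_powr_mult_tail_1_le_rate assms by (simp add: tail_const_def)
  next
    case 3 thus ?thesis using h_powr_mult_tail_lt1_le_rate assms by (simp add: tail_const_def)
  qed
qed

lemma majorant_integral_le_rate:
  assumes "h \<le> T/2"
  shows "majorant_integral \<le> ennreal (majorant_const p q T * R)"
proof -
  have s: "0 < 2-2*p-q" using pq by simp
  have "h powr (2-2*p-q) / (2-2*p-q) \<le> hscale_const p q T * R / (2-2*p-q)"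
    using hscale_le_rate[OF assms] s by (intro divide_right_mono) auto
  moreover have "h * tail (2*p+q) \<le> tail_const p q T 1 (2*p+q) * R"
    using h_powr_mult_tail_le_rate[OF assms, of 1 "2*p+q"] p0 h0 by simp
  moreover have "h powr (1-p) * tail (p+q) \<le> tail_const p q T (1-p) (p+q) * R"
    by (rule h_powr_mult_tail_le_rate[OF assms]) auto
  ultimately have "majorant_bound
      \<le> (3 * 2 powr (1-p) / (1-p) + 2 powr (p+2) / (1-q))
          * (hscale_const p q T * R / (2-2*p-q) + tail_const p q T 1 (2*p+q) * R)
        + (2 powr q / (1-p) * (hscale_const p q T * R / (2-2*p-q))
          + 2 powr q * (1/(1-p) + 1/p) * (tail_const p q T (1-p) (p+q) * R))"
    unfolding majorant_bound_def using p0 p1 q1 by (intro add_mono mult_left_mono) auto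
  also have "\<dots> = majorant_const p q T * R"
    unfolding majorant_const_def by (simp add: distrib_left distrib_right add_divide_distrib mult_ac)
  finally show ?thesis using majorant_integral_le_bound by (meson ennreal_leI order_trans)
qed

lemma near_grid_integral_le_rate:
  assumes "h \<le> T/2" "0 \<le> \<eta>" "\<eta> \<le> T" "0 \<le> a" "a \<le> \<tau>" "\<tau> \<le> T" "\<tau> - a \<le> h"
  shows "(\<integral>\<^sup>+r\<in>{0..\<eta>}. (\<integral>\<^sup>+v\<in>{a..\<tau>}. ennreal (g (\<eta>-r) * g (\<tau>-v) * k \<bar>v-r\<bar>) \<partial>lborel) \<partial>lborel)
    \<le> ennreal (3 * majorant_const p q T * R)"
proof -
  have "(\<integral>\<^sup>+r\<in>{0..\<eta>}. (\<integral>\<^sup>+v\<in>{a..\<tau>}. ennreal (g (\<eta>-r) * g (\<tau>-v) * k \<bar>v-r\<bar>) \<partial>lborel) \<partial>lborel)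
      \<le> 3 * majorant_integral"
    using assms by (intro double_integral_le_majorant_integral) (auto simp: f_below_h)
  also have "\<dots> \<le> 3 * ennreal (majorant_const p q T * R)"
    using majorant_integral_le_rate[OF assms(1)] by (intro mult_left_mono) auto
  finally show ?thesis by (simp add: ennreal_mult' mult.assoc)
qed

lemma grid_increment_integral_le_rate:
  assumes "h \<le> T/2" "0 \<le> \<eta>" "\<eta> \<le> T" "0 \<le> a" "a < \<tau>" "\<tau> \<le> T" "\<tau> - a \<le> h"
  shows "(\<integral>\<^sup>+r\<in>{0..\<eta>}. (\<integral>\<^sup>+v\<in>{0..a}. ennreal (g (\<eta>-r) * (g (a-v) - g (\<tau>-v)) * k \<bar>v-r\<bar>) \<partial>lborel) \<partial>lborel)
    \<le> ennreal (3 * majorant_const p q T * R)"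
proof -
  have "g (a-v) - g (\<tau>-v) \<le> f (a-v)" if "v \<in> {0..a}" for v
    using g_increment_le_f[of "a-v" "\<tau>-a"] that assms by auto
  hence "(\<integral>\<^sup>+r\<in>{0..\<eta>}. (\<integral>\<^sup>+v\<in>{0..a}. ennreal (g (\<eta>-r) * (g (a-v) - g (\<tau>-v)) * k \<bar>v-r\<bar>) \<partial>lborel) \<partial>lborel)
      \<le> 3 * majorant_integral"
    using assms by (intro double_integral_le_majorant_integral) auto
  also have "\<dots> \<le> 3 * ennreal (majorant_const p q T * R)"
    using majorant_integral_le_rate[OF assms(1)] by (intro mult_left_mono) auto
  finally show ?thesis by (simp add: ennreal_mult' mult.assoc)
qed

end

lemma grid_integrals_le_rate:
  fixes H \<alpha> T h \<eta> a \<tau> :: real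
  assumes "1/2 < H" "H < 1" "1 - H < \<alpha>" "\<alpha> < 1"
    and h: "0 < h" "h \<le> T/2" and \<eta>: "\<eta> \<in> {0..T}" and a: "0 \<le> a" "a < \<tau>" "\<tau> \<le> T" "\<tau> - a \<le> h"
  shows "(\<integral>\<^sup>+ r\<in>{0..\<eta>}. (\<integral>\<^sup>+ v\<in>{a..\<tau>}.
          ennreal ((\<eta> - r) powr (\<alpha> - 1) * (\<tau> - v) powr (\<alpha> - 1) * \<bar>v - r\<bar> powr (2*H - 2))
        \<partial>lborel) \<partial>lborel)
      \<le> ennreal (3 * majorant_const (1-\<alpha>) (2-2*H) T * rate H \<alpha> T h)
    \<and> (\<integral>\<^sup>+ r\<in>{0..\<eta>}. (\<integral>\<^sup>+ v\<in>{0..a}.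
          ennreal ((\<eta> - r) powr (\<alpha> - 1) * ((a - v) powr (\<alpha> - 1) - (\<tau> - v) powr (\<alpha> - 1)) *
            \<bar>v - r\<bar> powr (2*H - 2))
        \<partial>lborel) \<partial>lborel)
      \<le> ennreal (3 * majorant_const (1-\<alpha>) (2-2*H) T * rate H \<alpha> T h)"
proof -
  interpret fractional_kernels "1-\<alpha>" "2-2*H" h T
    using assms by unfold_locales auto
  have gk: "g x = x powr (\<alpha> - 1)" "k x = x powr (2*H - 2)" for x
    by (simp_all add: g_def k_def)
  have "1 - (2-2*H)/2 = H" "1 - (1-\<alpha>) = \<alpha>" by (simp_all add: field_simps)
  hence rate: "R = rate H \<alpha> T h" by (simp only:)
  show ?thesis
    using near_grid_integral_le_rate[OF h(2)] grid_increment_integral_le_rate[OF h(2)] \<eta> a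
    unfolding gk rate by simp
qed

lemma grid_cell_bounds:
  fixes T \<tau> :: real
  assumes "0 < T" "2 \<le> N" "1 \<le> j" "j \<le> N" "\<tau> \<in> {(real j - 1) * (T / real N) <.. real j * (T / real N)}"
  shows "0 < T / real N" "T / real N \<le> T/2" "0 \<le> (real j - 1) * (T / real N)"
    "(real j - 1) * (T / real N) < \<tau>" "\<tau> \<le> T" "\<tau> - (real j - 1) * (T / real N) \<le> T / real N"
proof -
  define h where "h = T / real N"
  have "0 < h" "h \<le> T/2" "real N * h = T" using assms by (auto simp: h_def field_simps)
  moreover have "real j * h \<le> real N * h" using assms \<open>0 < h\<close> by (intro mult_right_mono) auto
  moreover have "real j * h = (real j - 1) * h + h" by (simp add: algebra_simps)
  moreover have "0 \<le> (real j - 1) * h" using assms \<open>0 < h\<close> by simp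
  ultimately show "0 < T / real N" "T / real N \<le> T/2" "0 \<le> (real j - 1) * (T / real N)"
    "(real j - 1) * (T / real N) < \<tau>" "\<tau> \<le> T" "\<tau> - (real j - 1) * (T / real N) \<le> T / real N"
    using assms(5) unfolding h_def[symmetric] by auto
qed

theorem lemma3p6:
  fixes H \<alpha> T :: real
  assumes "1/2 < H" "H < 1" "1 - H < \<alpha>" "\<alpha> < 1" "0 < T"
  shows "\<exists>C::real. \<forall>N::nat. \<forall>\<eta> j \<tau>.
     N \<ge> 2 \<longrightarrow> \<eta> \<in> {0..T} \<longrightarrow> 1 \<le> j \<longrightarrow> j \<le> N \<longrightarrow>
     \<tau> \<in> {(real j - 1) * (T / real N) <.. real j * (T / real N)} \<longrightarrow>
     (\<integral>\<^sup>+ r\<in>{0..\<eta>}. (\<integral>\<^sup>+ v\<in>{(real j - 1) * (T / real N)..\<tau>}.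
          ennreal ((\<eta> - r) powr (\<alpha> - 1) * (\<tau> - v) powr (\<alpha> - 1) * \<bar>v - r\<bar> powr (2*H - 2))
        \<partial>lborel) \<partial>lborel)
       \<le> ennreal (C * rate H \<alpha> T (T / real N))
     \<and>
     (\<integral>\<^sup>+ r\<in>{0..\<eta>}. (\<integral>\<^sup>+ v\<in>{0..(real j - 1) * (T / real N)}.
          ennreal ((\<eta> - r) powr (\<alpha> - 1) *
            (((real j - 1) * (T / real N) - v) powr (\<alpha> - 1) - (\<tau> - v) powr (\<alpha> - 1)) *
            \<bar>v - r\<bar> powr (2*H - 2))
        \<partial>lborel) \<partial>lborel)
       \<le> ennreal (C * rate H \<alpha> T (T / real N))"
  by (intro exI[of _ "3 * majorant_const (1-\<alpha>) (2-2*H) T"] allI impI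
      grid_integrals_le_rate[OF assms(1-4)] grid_cell_bounds[OF assms(5)]) assumption+

end
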